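(* Let $(S_1,\dots,S_{n-1},P)$ be a $\Gamma_n$-contraction on a Hilbert space $\mathcal H$, and let $(A_1,\dots,A_{n-1})$ and $(B_1,\dots,B_{n-1})$ be the fundamental operator tuples of $(S_1,\dots,S_{n-1},P)$ and $(S_1^*,\dots,S_{n-1}^*,P^* )$ respectively. Then $PA_i=B_i^*P|_{\mathcal D_P}$ for $i=1,\dots,n-1$ (as operators from $\mathcal D_P$ to $\mathcal D_{P^*}$).
   Context: $\Gamma_n=\pi_n(\overline{\mathbb D}^n)$ with $\pi_n$ the symmetrization map. A $\Gamma_n$-contraction is a commuting tuple with Taylor joint spectrum in $\Gamma_n$ and $\|f(\cdot)\|\le\sup_{\Gamma_n}|f|$ for polynomials. $D_T=(I-T^*T)^{1/2}$, $\mathcal D_T=\overline{\operatorname{Ran}}D_T$. The fundamental operator tuple of a $\Gamma_n$-contraction $(S_1,\dots,S_{n-1},P)$ is the unique $(F_1,\dots,F_{n-1})$ in $\mathcal B(\mathcal D_P)$ with $S_i-S_{n-i}^*P=D_PF_iD_P$; for the adjoint tuple, $B_i\in\mathcal B(\mathcal D_{P^*})$ with $S_i^*-S_{n-i}P^*=D_{P^*}B_iD_{P^*}$. *)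

theory Defs
  imports "HOL-Analysis.Analysis"
begin

class complex_vector = real_vector +
  fixes scaleC :: "complex \<Rightarrow> 'a \<Rightarrow> 'a"
  assumes scaleC_add_right: "scaleC a (x + y) = scaleC a x + scaleC a y"
    and scaleC_add_left: "scaleC (a + b) x = scaleC a x + scaleC b x"
    and scaleC_scaleC: "scaleC a (scaleC b x) = scaleC (a * b) x"
    and scaleC_one: "scaleC 1 x = x"
    and scaleR_scaleC: "scaleR r x = scaleC (complex_of_real r) x"

class complex_inner = complex_vector + real_normed_vector +
  fixes cinner :: "'a \<Rightarrow> 'a \<Rightarrow> complex"
  assumes cinner_commute: "cinner x y = cnj (cinner y x)"
    and cinner_add_left: "cinner (x + y) z = cinner x z + cinner y z"
    and cinner_scaleC_left: "cinner (scaleC r x) y = cnj r * cinner x y"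
    and cinner_real: "Im (cinner x x) = 0"
    and cinner_ge_zero: "0 \<le> Re (cinner x x)"
    and cinner_eq_zero_iff: "cinner x x = 0 \<longleftrightarrow> x = 0"
    and norm_eq_sqrt_cinner: "norm x = sqrt (Re (cinner x x))"

class chilbert = complex_inner + complete_space

definition bounded_op :: "('a::complex_inner \<Rightarrow> 'a) \<Rightarrow> bool" where
  "bounded_op T \<longleftrightarrow> (\<forall>x y. T (x + y) = T x + T y) \<and> (\<forall>c x. T (scaleC c x) = scaleC c (T x))
     \<and> (\<exists>K. \<forall>x. norm (T x) \<le> norm x * K)"

definition hadjoint :: "('a::complex_inner \<Rightarrow> 'a) \<Rightarrow> ('a \<Rightarrow> 'a)" where
  "hadjoint T = (THE T'. \<forall>x y. cinner (T x) y = cinner x (T' y))"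

definition positive_op :: "('a::complex_inner \<Rightarrow> 'a) \<Rightarrow> bool" where
  "positive_op R \<longleftrightarrow> bounded_op R \<and> (\<forall>x. Im (cinner (R x) x) = 0 \<and> 0 \<le> Re (cinner (R x) x))"

definition defect :: "('a::complex_inner \<Rightarrow> 'a) \<Rightarrow> ('a \<Rightarrow> 'a)" where
  "defect T = (THE R. positive_op R \<and> (\<forall>x. R (R x) = x - hadjoint T (T x)))"

definition defect_space :: "('a::complex_inner \<Rightarrow> 'a) \<Rightarrow> 'a set" where
  "defect_space T = closure (range (defect T))"

text \<open>An operator in B(M), M a closed subspace, is represented faithfully by the
  operator on the whole space that maps M into M and vanishes on the orthogonal complement.\<close>
definition op_on :: "'a::complex_inner set \<Rightarrow> ('a \<Rightarrow> 'a) \<Rightarrow> bool" where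
  "op_on M F \<longleftrightarrow> bounded_op F \<and> F ` M \<subseteq> M \<and> (\<forall>x. (\<forall>m\<in>M. cinner x m = 0) \<longrightarrow> F x = 0)"

definition fundamental_tuple ::
  "nat \<Rightarrow> (nat \<Rightarrow> 'a::complex_inner \<Rightarrow> 'a) \<Rightarrow> ('a \<Rightarrow> 'a) \<Rightarrow> (nat \<Rightarrow> 'a \<Rightarrow> 'a) \<Rightarrow> bool" where
  "fundamental_tuple n S P F \<longleftrightarrow>
     (\<forall>i\<in>{1..n-1}. op_on (defect_space P) (F i) \<and>
        (\<forall>x. S i x - hadjoint (S (n - i)) (P x) = defect P (F i (defect P x))))"

text \<open>Points of C^n are functions nat => complex, coordinates 1..n (zero elsewhere).\<close>
definition esym :: "nat \<Rightarrow> nat \<Rightarrow> (nat \<Rightarrow> complex) \<Rightarrow> complex" where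
  "esym n k z = (\<Sum>I\<in>{I. I \<subseteq> {1..n} \<and> card I = k}. \<Prod>i\<in>I. z i)"

definition Gamma :: "nat \<Rightarrow> (nat \<Rightarrow> complex) set" where
  "Gamma n = {w. \<exists>z. (\<forall>j\<in>{1..n}. cmod (z j) \<le> 1) \<and> (\<forall>k\<in>{1..n}. w k = esym n k z)
                    \<and> (\<forall>k. k \<notin> {1..n} \<longrightarrow> w k = 0)}"

text \<open>A polynomial in n variables: finite set M of multi-indices (nat => nat, exponents of
  variables 1..n) with coefficients c.\<close>
definition poly_eval :: "nat \<Rightarrow> (nat \<Rightarrow> nat) set \<Rightarrow> ((nat \<Rightarrow> nat) \<Rightarrow> complex) \<Rightarrow> (nat \<Rightarrow> complex) \<Rightarrow> complex" where
  "poly_eval n M c w = (\<Sum>\<alpha>\<in>M. c \<alpha> * (\<Prod>j\<in>{1..n}. w j ^ \<alpha> j))"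

fun op_monomial :: "(nat \<Rightarrow> 'a \<Rightarrow> 'a) \<Rightarrow> (nat \<Rightarrow> nat) \<Rightarrow> nat \<Rightarrow> 'a \<Rightarrow> 'a" where
  "op_monomial T \<alpha> 0 = id"
| "op_monomial T \<alpha> (Suc k) = op_monomial T \<alpha> k \<circ> (T (Suc k) ^^ \<alpha> (Suc k))"

definition poly_op :: "nat \<Rightarrow> (nat \<Rightarrow> nat) set \<Rightarrow> ((nat \<Rightarrow> nat) \<Rightarrow> complex) \<Rightarrow> (nat \<Rightarrow> 'a::complex_vector \<Rightarrow> 'a) \<Rightarrow> 'a \<Rightarrow> 'a" where
  "poly_op n M c T x = (\<Sum>\<alpha>\<in>M. scaleC (c \<alpha>) (op_monomial T \<alpha> n x))"

definition gtuple :: "nat \<Rightarrow> (nat \<Rightarrow> 'a \<Rightarrow> 'a) \<Rightarrow> ('a \<Rightarrow> 'a) \<Rightarrow> nat \<Rightarrow> 'a \<Rightarrow> 'a" where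
  "gtuple n S P j = (if j = n then P else S j)"

definition gamma_contraction :: "nat \<Rightarrow> (nat \<Rightarrow> 'a::complex_inner \<Rightarrow> 'a) \<Rightarrow> ('a \<Rightarrow> 'a) \<Rightarrow> bool" where
  "gamma_contraction n S P \<longleftrightarrow>
     (\<forall>j\<in>{1..n}. bounded_op (gtuple n S P j)) \<and>
     (\<forall>j\<in>{1..n}. \<forall>k\<in>{1..n}. gtuple n S P j \<circ> gtuple n S P k = gtuple n S P k \<circ> gtuple n S P j) \<and>
     (\<forall>M c. finite M \<longrightarrow> (\<forall>x. norm (poly_op n M c (gtuple n S P) x)
            \<le> (SUP w\<in>Gamma n. cmod (poly_eval n M c w)) * norm x))"

end

(*
  The defect operators intertwine: P D_P = D_{P^*} P. Indeed D_P, the positive square root of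
  I - P^* P, is the norm-convergent binomial series in P^* P, and
  P (I - P^* P) = P - P P^* P = (I - P P^* ) P.
  Hence, by the fundamental equations of the two tuples, D_{P^*} P A_i D_P = P S_i - P S_{n-i}^* P
  and D_{P^*} B_i^* P D_P = S_i P - P S_{n-i}^* P, which agree because S_i commutes with P.
  So w = (P A_i - B_i^* P) D_P u lies in the kernel of D_{P^*}, i.e. is orthogonal to the
  defect space of P^*. But P A_i D_P u lies in that space and B_i vanishes on its orthogonal
  complement, so w is orthogonal to itself. Thus P A_i and B_i^* P agree on Ran D_P, and by
  continuity on its closure.
*)
theory Submission
  imports Defs "HOL-Computational_Algebra.Formal_Power_Series"
begin

section \<open>Complex inner product spaces\<close>

subclass (in chilbert) banach ..

lemma scaleC_scaleR_commute: "scaleC a (scaleR r (x::'a::complex_vector)) = scaleR r (scaleC a x)"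
  by (simp add: scaleR_scaleC scaleC_scaleC mult.commute)

lemma cinner_zero_left [simp]: "cinner 0 (y::'a::complex_inner) = 0"
  using cinner_add_left[of "0::'a" 0 y] by simp

lemma cinner_add_right: "cinner (x::'a::complex_inner) (y + z) = cinner x y + cinner x z"
  by (metis cinner_add_left cinner_commute complex_cnj_add)

lemma cinner_zero_right [simp]: "cinner (x::'a::complex_inner) 0 = 0"
  by (metis cinner_commute cinner_zero_left complex_cnj_zero)

lemma cinner_scaleC_right: "cinner (x::'a::complex_inner) (scaleC r y) = r * cinner x y"
  by (metis cinner_commute cinner_scaleC_left complex_cnj_cnj complex_cnj_mult)

lemma cinner_minus_left: "cinner (- x::'a::complex_inner) y = - cinner x y"
  using cinner_add_left[of "-x" x y] by (simp add: eq_neg_iff_add_eq_0)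

lemma cinner_minus_right: "cinner (x::'a::complex_inner) (- y) = - cinner x y"
  using cinner_add_right[of x "-y" y] by (simp add: eq_neg_iff_add_eq_0)

lemma cinner_diff_left: "cinner (x - y::'a::complex_inner) z = cinner x z - cinner y z"
  using cinner_add_left[of x "-y" z] by (simp add: cinner_minus_left)

lemma cinner_diff_right: "cinner (x::'a::complex_inner) (y - z) = cinner x y - cinner x z"
  using cinner_add_right[of x y "-z"] by (simp add: cinner_minus_right)

lemma cinner_scaleR_left: "cinner (scaleR r x::'a::complex_inner) y = of_real r * cinner x y"
  by (simp add: scaleR_scaleC cinner_scaleC_left)

lemma cinner_scaleR_right: "cinner (x::'a::complex_inner) (scaleR r y) = of_real r * cinner x y"
  by (simp add: scaleR_scaleC cinner_scaleC_right)

lemma cinner_self: "cinner x (x::'a::complex_inner) = complex_of_real ((norm x)\<^sup>2)"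
proof -
  have "(norm x)\<^sup>2 = Re (cinner x x)" using norm_eq_sqrt_cinner[of x] cinner_ge_zero[of x] by simp
  then show ?thesis using cinner_real[of x] by (simp add: complex_eq_iff)
qed

lemma Re_cinner_self: "Re (cinner x (x::'a::complex_inner)) = (norm x)\<^sup>2"
  by (simp add: cinner_self)

lemma cnj_cinner: "cnj (cinner x (y::'a::complex_inner)) = cinner y x"
  by (metis cinner_commute)

lemma cinner_self_add_scaleC:
  "cinner (x + scaleC t y) (x + scaleC t (y::'a::complex_inner)) =
     cinner x x + cnj t * cinner y x + t * cinner x y + cnj t * t * cinner y y"
  by (simp add: cinner_add_left cinner_add_right cinner_scaleC_left cinner_scaleC_right algebra_simps)

lemma sesquilinear_nonneg_imp_zero:
  fixes a :: complex and K :: real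
  assumes nonneg: "\<And>t. 0 \<le> Re (t * a + cnj t * cnj a) + (cmod t)\<^sup>2 * K" and K: "K \<ge> 0"
  shows "a = 0"
proof (rule ccontr)
  assume "a \<noteq> 0"
  then have q: "(cmod a)\<^sup>2 > 0" by simp
  define s where "s = 1 / (K + 1)"
  have s: "s > 0" "s * K < 1" using K by (auto simp: s_def field_simps)
  define t where "t = - of_real s * cnj a"
  have "Re (t * a + cnj t * cnj a) = - 2 * s * (cmod a)\<^sup>2"
    unfolding cmod_power2 by (simp add: t_def power2_eq_square algebra_simps)
  moreover have "(cmod t)\<^sup>2 = s\<^sup>2 * (cmod a)\<^sup>2"
    using s(1) by (simp add: t_def norm_mult power_mult_distrib)
  ultimately have "0 \<le> - 2 * s * (cmod a)\<^sup>2 + s\<^sup>2 * (cmod a)\<^sup>2 * K"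
    using nonneg[of t] by simp
  also have "\<dots> = s * (cmod a)\<^sup>2 * (s * K - 2)"
    by (simp add: power2_eq_square algebra_simps)
  also have "\<dots> < 0" using s q by (simp add: mult_pos_neg)
  finally show False by simp
qed

lemma orthogonal_if_norm_minimal:
  fixes z w :: "'a::complex_inner"
  assumes "\<And>t. norm z \<le> norm (z + scaleC t w)"
  shows "cinner z w = 0"
proof (rule sesquilinear_nonneg_imp_zero[where K = "(norm w)\<^sup>2"])
  fix t
  have "(norm z)\<^sup>2 \<le> (norm (z + scaleC t w))\<^sup>2" using assms by (simp add: power_mono)
  then have "Re (cinner z z) \<le> Re (cinner (z + scaleC t w) (z + scaleC t w))"
    by (simp only: Re_cinner_self)
  moreover have "cinner w z = cnj (cinner z w)" by (rule cinner_commute)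
  moreover have "cnj t * t = of_real ((cmod t)\<^sup>2)" by (metis complex_norm_square mult.commute)
  then have "cnj t * t * cinner w w = of_real ((cmod t)\<^sup>2 * (norm w)\<^sup>2)"
    by (simp only: cinner_self of_real_mult)
  ultimately show "0 \<le> Re (t * cinner z w + cnj t * cnj (cinner z w)) + (cmod t)\<^sup>2 * (norm w)\<^sup>2"
    unfolding cinner_self_add_scaleC by simp
qed simp

lemma cmod_cinner_le: "cmod (cinner x (y::'a::complex_inner)) \<le> norm x * norm y"
proof (cases "y = 0")
  case True then show ?thesis by simp
next
  case False
  define a where "a = cinner y x"
  define N where "N = (norm y)\<^sup>2"
  define t where "t = - a / complex_of_real N"
  have N: "N > 0" using False by (simp add: N_def)
  have cxy: "cinner x y = cnj a" by (simp add: a_def cnj_cinner)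
  have aa: "a * cnj a = complex_of_real ((cmod a)\<^sup>2)" by (metis complex_norm_square)
  have "cnj t * a = - (a * cnj a) / complex_of_real N" "t * cnj a = - (a * cnj a) / complex_of_real N"
    by (simp_all add: t_def mult.commute)
  then have ta: "cnj t * a = - complex_of_real ((cmod a)\<^sup>2 / N)" "t * cnj a = - complex_of_real ((cmod a)\<^sup>2 / N)"
    by (simp_all add: aa)
  have "cnj t * t * complex_of_real N = cnj t * (t * complex_of_real N)" by (simp add: mult.assoc)
  also have "\<dots> = complex_of_real ((cmod a)\<^sup>2 / N)" using N ta(1) by (simp add: t_def)
  finally have tt: "cnj t * t * complex_of_real N = complex_of_real ((cmod a)\<^sup>2 / N)" .
  have "0 \<le> Re (cinner (x + scaleC t y) (x + scaleC t y))" by (rule cinner_ge_zero)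
  also have "cinner (x + scaleC t y) (x + scaleC t y) = complex_of_real ((norm x)\<^sup>2 - (cmod a)\<^sup>2 / N)"
    unfolding cinner_self_add_scaleC cxy a_def[symmetric] cinner_self[of y] N_def[symmetric] ta tt
    by (simp add: cinner_self)
  finally have "(cmod a)\<^sup>2 \<le> (norm x)\<^sup>2 * N" using N by (simp add: field_simps)
  then have "(cmod a)\<^sup>2 \<le> (norm x * norm y)\<^sup>2" by (simp add: N_def power_mult_distrib)
  then have "cmod a \<le> norm x * norm y" by (simp add: abs_le_square_iff)
  then show ?thesis by (metis a_def cnj_cinner complex_mod_cnj)
qed

lemma cinner_ext_right: "(\<And>z. cinner z x = cinner z (y::'a::complex_inner)) \<Longrightarrow> x = y"
proof -
  assume "\<And>z. cinner z x = cinner z y"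
  then have "cinner (x - y) (x - y) = 0" by (simp add: cinner_diff_right)
  then show "x = y" by (simp add: cinner_eq_zero_iff)
qed

lemma norm_scaleC: "norm (scaleC c (x::'a::complex_inner)) = cmod c * norm x"
proof -
  have cc: "cnj c * c = of_real ((cmod c)\<^sup>2)" by (metis complex_norm_square mult.commute)
  have "cinner (scaleC c x) (scaleC c x) = cnj c * c * cinner x x"
    by (simp add: cinner_scaleC_left cinner_scaleC_right mult.assoc)
  also have "\<dots> = complex_of_real ((cmod c * norm x)\<^sup>2)"
    unfolding cc cinner_self by (simp add: power_mult_distrib)
  finally have "cinner (scaleC c x) (scaleC c x) = complex_of_real ((cmod c * norm x)\<^sup>2)" .
  then have "(norm (scaleC c x))\<^sup>2 = (cmod c * norm x)\<^sup>2"
    using Re_cinner_self[of "scaleC c x"] by simp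
  then show ?thesis by simp
qed

lemma bounded_linear_scaleC: "bounded_linear (\<lambda>x::'a::complex_inner. scaleC c x)"
  by (rule bounded_linear_intro[where K = "cmod c"])
     (auto simp: scaleC_add_right scaleC_scaleR_commute norm_scaleC)

lemma bounded_linear_cinner_left: "bounded_linear (\<lambda>x::'a::complex_inner. cinner x y)"
  by (rule bounded_linear_intro[where K = "norm y"])
     (auto simp: cinner_add_left cinner_scaleR_left cmod_cinner_le scaleR_conv_of_real)

lemma bounded_linear_cinner_right: "bounded_linear (\<lambda>y::'a::complex_inner. cinner x y)"
  by (rule bounded_linear_intro[where K = "norm x"])
     (auto simp: cinner_add_right cinner_scaleR_right scaleR_conv_of_real, metis cmod_cinner_le mult.commute)

lemma closed_orthogonal_complement: "closed {y::'a::complex_inner. cinner x y = 0}"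
  by (rule closed_Collect_eq[OF linear_continuous_on[OF bounded_linear_cinner_right] continuous_on_const])


section \<open>Minimal vectors and the Riesz representation theorem\<close>

lemma parallelogram_law:
  "(norm (x + y))\<^sup>2 + (norm (x - y))\<^sup>2 = 2 * (norm x)\<^sup>2 + 2 * (norm (y::'a::complex_inner))\<^sup>2"
proof -
  have "cinner (x + y) (x + y) + cinner (x - y) (x - y) = 2 * cinner x x + 2 * cinner y y"
    by (simp add: cinner_add_left cinner_add_right cinner_diff_left cinner_diff_right)
  then have "complex_of_real ((norm (x + y))\<^sup>2 + (norm (x - y))\<^sup>2)
      = complex_of_real (2 * (norm x)\<^sup>2 + 2 * (norm y)\<^sup>2)"
    by (simp add: cinner_self)
  then show ?thesis by (simp only: of_real_eq_iff)
qed

lemma Cauchy_minimizing_sequence: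
  fixes u :: "nat \<Rightarrow> 'a::complex_inner"
  assumes H: "convex H" and u: "\<And>k. u k \<in> H" and d: "\<And>x. x \<in> H \<Longrightarrow> d \<le> norm x"
    and approx: "\<And>k. norm (u k) < d + 1 / Suc k"
  shows "Cauchy u"
proof (rule CauchyI)
  fix e :: real assume e: "e > 0"
  have d0: "d \<ge> 0"
  proof (rule ccontr)
    assume "\<not> d \<ge> 0"
    then obtain k where "inverse (real (Suc k)) < - d" using reals_Archimedean[of "- d"] by fastforce
    then show False using approx[of k] norm_ge_zero[of "u k"] by (simp add: inverse_eq_divide)
  qed
  have mid: "2 * d \<le> norm (u m + u n)" for m n
    using d[OF convexD[OF H u[of m] u[of n], of "1/2" "1/2"]] by (simp add: scaleR_add_right[symmetric])
  obtain N :: nat where N: "(8 * d + 4) / e\<^sup>2 < N" using reals_Archimedean2 by blast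
  have small: "1 / real (Suc m) < e\<^sup>2 / (8 * d + 4)" if "N \<le> m" for m
  proof -
    have "(8 * d + 4) / e\<^sup>2 < Suc m" using N that by linarith
    then show ?thesis using e d0 by (simp add: field_simps)
  qed
  have "norm (u m - u n) < e" if mn: "N \<le> m" "N \<le> n" for m n
  proof -
    define em en where "em = 1 / real (Suc m)" and "en = 1 / real (Suc n)"
    have em: "0 < em" "em \<le> 1" and en: "0 < en" "en \<le> 1" by (auto simp: em_def en_def)
    have "(norm (u m - u n))\<^sup>2 = 2 * (norm (u m))\<^sup>2 + 2 * (norm (u n))\<^sup>2 - (norm (u m + u n))\<^sup>2"
      using parallelogram_law[of "u m" "u n"] by simp
    also have "\<dots> \<le> 2 * (d + em)\<^sup>2 + 2 * (d + en)\<^sup>2 - (2 * d)\<^sup>2"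
      using approx[of m] approx[of n] mid[of m n] d0
      by (intro diff_mono add_mono mult_left_mono power_mono) (auto simp: em_def en_def)
    also have "\<dots> = 4 * d * (em + en) + 2 * em * em + 2 * en * en"
      by (simp add: power2_eq_square algebra_simps)
    also have "\<dots> \<le> 4 * d * (em + en) + 2 * em + 2 * en"
      using em en by (intro add_mono) (auto simp: mult_left_le_one_le mult_right_le_one_le)
    also have "\<dots> = (4 * d + 2) * (em + en)" by (simp add: algebra_simps)
    also have "\<dots> < (4 * d + 2) * (2 * (e\<^sup>2 / (8 * d + 4)))"
      using small[OF mn(1)] small[OF mn(2)] d0 by (intro mult_strict_left_mono) (auto simp: em_def en_def)
    also have "\<dots> = e\<^sup>2" using d0 by (simp add: field_simps)
    finally show ?thesis using e by (simp add: power_less_imp_less_base)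
  qed
  then show "\<exists>M. \<forall>m\<ge>M. \<forall>n\<ge>M. norm (u m - u n) < e" by blast
qed

lemma exists_minimal_norm:
  fixes H :: "'a::chilbert set"
  assumes "convex H" "closed H" "H \<noteq> {}"
  shows "\<exists>z\<in>H. \<forall>x\<in>H. norm z \<le> norm x"
proof -
  define d where "d = Inf (norm ` H)"
  have bdd: "bdd_below (norm ` H)" by (rule bdd_belowI[of _ 0]) auto
  have d: "d \<le> norm x" if "x \<in> H" for x unfolding d_def using bdd that by (simp add: cInf_lower)
  have "\<exists>u. u \<in> H \<and> norm u < d + 1 / Suc k" for k
    using cInf_lessD[of "norm ` H" "d + 1 / Suc k"] assms(3) unfolding d_def by auto
  then obtain u where u: "\<And>k. u k \<in> H" "\<And>k. norm (u k) < d + 1 / Suc k" by metis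
  then have "Cauchy u" using Cauchy_minimizing_sequence[OF assms(1) _ d] by blast
  then obtain z where lim: "u \<longlonglongrightarrow> z" using Cauchy_convergent_iff convergent_def by blast
  have "z \<in> H" using closed_sequentially[OF assms(2)] u(1) lim by blast
  moreover have "norm z \<le> d"
  proof (rule LIMSEQ_le[OF tendsto_norm[OF lim]])
    show "(\<lambda>k. d + 1 / Suc k) \<longlonglongrightarrow> d"
      using tendsto_add[OF tendsto_const LIMSEQ_Suc[OF lim_const_over_n[of 1]], of d] by simp
  qed (use u(2) less_imp_le in blast)
  ultimately show ?thesis using d by force
qed

theorem riesz_representation:
  fixes f :: "'a::chilbert \<Rightarrow> complex"
  assumes add: "\<And>x y. f (x + y) = f x + f y" and scale: "\<And>c x. f (scaleC c x) = c * f x"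
    and bound: "\<And>x. cmod (f x) \<le> norm x * K"
  shows "\<exists>y. \<forall>x. f x = cinner y x"
proof (cases "\<forall>x. f x = 0")
  case True then show ?thesis by (intro exI[of _ 0]) auto
next
  case False
  then obtain x0 where x0: "f x0 \<noteq> 0" by auto
  have lin: "bounded_linear f"
    by (rule bounded_linear_intro[where K = K]) (auto simp: add scaleR_scaleC scale scaleR_conv_of_real bound)
  define H where "H = {x. f x = 1}"
  have "convex H"
    unfolding H_def convex_def
    by (auto simp: linear_add[OF bounded_linear.linear[OF lin]] linear_scale[OF bounded_linear.linear[OF lin]]
        scaleR_conv_of_real simp flip: of_real_add)
  moreover have "closed H"
    unfolding H_def by (intro closed_Collect_eq continuous_on_const linear_continuous_on[OF lin])
  moreover have "scaleC (1 / f x0) x0 \<in> H" using x0 by (simp add: H_def scale)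
  ultimately obtain z where z: "f z = 1" "\<And>x. f x = 1 \<Longrightarrow> norm z \<le> norm x"
    using exists_minimal_norm[of H] unfolding H_def by blast
  have orth: "cinner z w = 0" if "f w = 0" for w
    by (rule orthogonal_if_norm_minimal) (simp add: z that add scale)
  define c where "c = cinner z z"
  have c: "c \<noteq> 0" "cnj c = c"
    using z(1) linear_0[OF bounded_linear.linear[OF lin]] by (auto simp: c_def cinner_eq_zero_iff cinner_self)
  have "cinner z x = f x * c" for x
  proof -
    have "f (x - scaleC (f x) z) = 0"
      using add[of "x - scaleC (f x) z" "scaleC (f x) z"] by (simp add: scale z(1))
    then have "cinner z (x - scaleC (f x) z) = 0" by (rule orth)
    then show ?thesis by (simp add: cinner_diff_right cinner_scaleC_right c_def)
  qed
  then show ?thesis using c by (intro exI[of _ "scaleC (1 / c) z"]) (simp add: cinner_scaleC_left)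
qed


section \<open>Bounded operators and adjoints\<close>

lemma bounded_op_iff:
  "bounded_op T \<longleftrightarrow> bounded_linear T \<and> (\<forall>c x. T (scaleC c x) = scaleC c (T x))"
proof
  assume T: "bounded_op T"
  then obtain K where "\<And>x. norm (T x) \<le> norm x * K" by (auto simp: bounded_op_def)
  then have "bounded_linear T"
    using T by (intro bounded_linear_intro[where K = K]) (auto simp: bounded_op_def scaleR_scaleC)
  then show "bounded_linear T \<and> (\<forall>c x. T (scaleC c x) = scaleC c (T x))"
    using T by (simp add: bounded_op_def)
next
  assume "bounded_linear T \<and> (\<forall>c x. T (scaleC c x) = scaleC c (T x))"
  then show "bounded_op T"
    by (auto simp: bounded_op_def linear_add bounded_linear.linear dest: bounded_linear.bounded)
qed

lemma bounded_op_linear: "bounded_op T \<Longrightarrow> bounded_linear T"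
  by (simp add: bounded_op_iff)

lemma bounded_op_add: "bounded_op T \<Longrightarrow> T (x + y) = T x + T y"
  by (simp add: bounded_op_def)

lemma bounded_op_scaleC: "bounded_op T \<Longrightarrow> T (scaleC c x) = scaleC c (T x)"
  by (simp add: bounded_op_def)

lemma bounded_op_scaleR: "bounded_op T \<Longrightarrow> T (scaleR r x) = scaleR r (T x)"
  by (simp add: bounded_op_def scaleR_scaleC)

lemma bounded_op_diff: "bounded_op T \<Longrightarrow> T (x - y) = T x - T y"
  by (metis bounded_op_linear bounded_linear.linear linear_diff)

lemma bounded_op_comp: "bounded_op T \<Longrightarrow> bounded_op U \<Longrightarrow> bounded_op (\<lambda>x. T (U x))"
  by (simp add: bounded_op_iff bounded_linear_compose)

lemma bounded_op_funpow: "bounded_op T \<Longrightarrow> bounded_op (T ^^ k)"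
proof (induction k)
  case 0 then show ?case by (simp add: bounded_op_iff id_def)
next
  case (Suc k) then show ?case using bounded_op_comp[of T "T ^^ k"] by (simp add: o_def)
qed

lemma bounded_linear_zero_on_closure:
  assumes W: "bounded_linear W" and zero: "\<And>x. x \<in> M \<Longrightarrow> W x = 0" and x: "x \<in> closure M"
  shows "W x = 0"
proof -
  have "closure M \<subseteq> {x. W x = 0}"
    using zero by (intro closure_minimal closed_Collect_eq[OF linear_continuous_on[OF W] continuous_on_const]) auto
  then show ?thesis using x by blast
qed

lemma hadjoint_exists:
  fixes T :: "'a::chilbert \<Rightarrow> 'a"
  assumes T: "bounded_op T"
  shows "\<exists>T'. \<forall>x y. cinner (T x) y = cinner x (T' y)"
proof -
  obtain K where K: "\<And>x. norm (T x) \<le> norm x * K" using T by (auto simp: bounded_op_def)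
  have "\<exists>z. \<forall>x. cinner y (T x) = cinner z x" for y
  proof (rule riesz_representation[where K = "norm y * \<bar>K\<bar>"])
    fix x
    have "norm (T x) \<le> norm x * \<bar>K\<bar>" by (metis K abs_ge_self mult_left_mono norm_ge_zero order_trans)
    then show "cmod (cinner y (T x)) \<le> norm x * (norm y * \<bar>K\<bar>)"
      using cmod_cinner_le[of y "T x"] by (smt (verit) mult.commute mult.left_commute mult_left_mono norm_ge_zero)
  qed (auto simp: bounded_op_add[OF T] bounded_op_scaleC[OF T] cinner_add_right cinner_scaleC_right)
  then obtain G where "\<And>y x. cinner y (T x) = cinner (G y) x" by metis
  then show ?thesis by (metis cinner_commute)
qed

lemma cinner_hadjoint_right:
  fixes T :: "'a::chilbert \<Rightarrow> 'a"
  assumes T: "bounded_op T"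
  shows "cinner (T x) y = cinner x (hadjoint T y)"
proof -
  have "\<exists>!T'. \<forall>x y. cinner (T x) y = cinner x (T' y)"
  proof (rule ex_ex1I)
    fix G1 G2
    assume "\<forall>x y. cinner (T x) y = cinner x (G1 y)" "\<forall>x y. cinner (T x) y = cinner x (G2 y)"
    then have "G1 y = G2 y" for y by (intro cinner_ext_right) auto
    then show "G1 = G2" by auto
  qed (rule hadjoint_exists[OF T])
  then have "\<forall>x y. cinner (T x) y = cinner x (hadjoint T y)"
    unfolding hadjoint_def by (rule theI')
  then show ?thesis by blast
qed

lemma cinner_hadjoint_left:
  fixes T :: "'a::chilbert \<Rightarrow> 'a"
  assumes T: "bounded_op T"
  shows "cinner (hadjoint T x) y = cinner x (T y)"
  by (metis cinner_hadjoint_right[OF T] cinner_commute)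

lemma hadjoint_eqI:
  fixes T :: "'a::chilbert \<Rightarrow> 'a"
  assumes T: "bounded_op T" and G: "\<And>x y. cinner (T x) y = cinner x (G y)"
  shows "hadjoint T = G"
  by (rule ext, rule cinner_ext_right) (metis G cinner_hadjoint_right[OF T])

lemma norm_hadjoint_le:
  fixes T :: "'a::chilbert \<Rightarrow> 'a"
  assumes T: "bounded_op T" and K: "K \<ge> 0" "\<And>x. norm (T x) \<le> norm x * K"
  shows "norm (hadjoint T y) \<le> norm y * K"
proof (cases "hadjoint T y = 0")
  case True then show ?thesis using K by simp
next
  case False
  let ?v = "hadjoint T y"
  have "(norm ?v)\<^sup>2 = Re (cinner y (T ?v))" by (simp flip: Re_cinner_self add: cinner_hadjoint_left[OF T])
  also have "\<dots> \<le> norm y * norm (T ?v)" using cmod_cinner_le complex_Re_le_cmod order_trans by blast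
  also have "\<dots> \<le> norm y * (norm ?v * K)" using K by (simp add: mult_left_mono)
  finally have "norm ?v * norm ?v \<le> norm ?v * (norm y * K)" by (simp add: power2_eq_square algebra_simps)
  then show ?thesis using False by simp
qed

lemma bounded_op_hadjoint:
  fixes T :: "'a::chilbert \<Rightarrow> 'a"
  assumes T: "bounded_op T"
  shows "bounded_op (hadjoint T)"
proof -
  obtain K where K: "\<And>x. norm (T x) \<le> norm x * K" using T by (auto simp: bounded_op_def)
  have K': "norm (T x) \<le> norm x * \<bar>K\<bar>" for x by (metis K abs_ge_self mult_left_mono norm_ge_zero order_trans)
  have "hadjoint T (x + y) = hadjoint T x + hadjoint T y" for x y
    by (rule cinner_ext_right) (simp add: cinner_hadjoint_right[OF T, symmetric] cinner_add_right)
  moreover have "hadjoint T (scaleC c x) = scaleC c (hadjoint T x)" for c x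
    by (rule cinner_ext_right) (simp add: cinner_hadjoint_right[OF T, symmetric] cinner_scaleC_right)
  ultimately show ?thesis unfolding bounded_op_def using norm_hadjoint_le[OF T _ K'] by auto
qed

lemma hadjoint_hadjoint:
  fixes T :: "'a::chilbert \<Rightarrow> 'a"
  assumes T: "bounded_op T"
  shows "hadjoint (hadjoint T) = T"
  by (rule hadjoint_eqI[OF bounded_op_hadjoint[OF T]]) (simp add: cinner_hadjoint_left[OF T])


section \<open>Contractions and positive operators\<close>

definition contraction_op :: "('a::complex_inner \<Rightarrow> 'a) \<Rightarrow> bool" where
  "contraction_op T \<longleftrightarrow> bounded_op T \<and> (\<forall>x. norm (T x) \<le> norm x)"

lemma contraction_op_bounded: "contraction_op T \<Longrightarrow> bounded_op T"
  by (simp add: contraction_op_def)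

lemma contraction_op_norm: "contraction_op T \<Longrightarrow> norm (T x) \<le> norm x"
  by (simp add: contraction_op_def)

lemma contraction_op_funpow: "contraction_op T \<Longrightarrow> norm ((T ^^ k) x) \<le> norm x"
  by (induction k) (auto intro: order_trans contraction_op_norm)

lemma contraction_op_hadjoint:
  fixes T :: "'a::chilbert \<Rightarrow> 'a"
  assumes "contraction_op T"
  shows "contraction_op (hadjoint T)"
  using assms norm_hadjoint_le[of T 1] bounded_op_hadjoint[of T]
  by (simp add: contraction_op_def)

lemma contraction_op_comp:
  "contraction_op T \<Longrightarrow> contraction_op U \<Longrightarrow> contraction_op (\<lambda>x. T (U x))"
  by (auto simp: contraction_op_def bounded_op_comp intro: order_trans)

lemma positive_op_bounded: "positive_op R \<Longrightarrow> bounded_op R"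
  by (simp add: positive_op_def)

lemma positive_op_Im: "positive_op R \<Longrightarrow> Im (cinner (R x) x) = 0"
  by (simp add: positive_op_def)

lemma positive_op_Re: "positive_op R \<Longrightarrow> 0 \<le> Re (cinner (R x) x)"
  by (simp add: positive_op_def)

text \<open>Polarization, using only that the quadratic form is real.\<close>

lemma positive_op_self_adjoint:
  assumes R: "positive_op R"
  shows "cinner (R x) y = cinner x (R y)"
proof -
  have B: "bounded_op R" using R by (rule positive_op_bounded)
  define a b where "a = cinner (R x) y" and "b = cinner x (R y)"
  have c1: "cinner (R y) x = cnj b" by (simp add: b_def cnj_cinner)
  have "Im (cinner (R (x + y)) (x + y)) = 0" by (rule positive_op_Im[OF R])
  then have "Im a = Im b"
    using positive_op_Im[OF R, of x] positive_op_Im[OF R, of y]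
    by (simp add: bounded_op_add[OF B] cinner_add_left cinner_add_right a_def c1)
  moreover have "Im (cinner (R (x + scaleC \<i> y)) (x + scaleC \<i> y)) = 0" by (rule positive_op_Im[OF R])
  then have "Re a = Re b"
    using positive_op_Im[OF R, of x] positive_op_Im[OF R, of y]
    by (simp add: bounded_op_add[OF B] bounded_op_scaleC[OF B] cinner_add_left cinner_add_right
        cinner_scaleC_left cinner_scaleC_right a_def c1 algebra_simps)
  ultimately show ?thesis by (simp add: complex_eq_iff a_def b_def)
qed

lemma positive_op_eq_zero:
  assumes R: "positive_op R" and y: "cinner (R y) y = 0"
  shows "R y = 0"
proof -
  have B: "bounded_op R" using R by (rule positive_op_bounded)
  have "cinner (R y) z = 0" for z
  proof (rule sesquilinear_nonneg_imp_zero[where K = "Re (cinner (R z) z)"])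
    fix t
    have "0 \<le> Re (cinner (R (y + scaleC t z)) (y + scaleC t z))" by (rule positive_op_Re[OF R])
    also have "cinner (R (y + scaleC t z)) (y + scaleC t z) =
        cinner (R y) y + t * cinner (R y) z + cnj t * cinner (R z) y + (cnj t * t) * cinner (R z) z"
      by (simp add: bounded_op_add[OF B] bounded_op_scaleC[OF B] cinner_add_left cinner_add_right
          cinner_scaleC_left cinner_scaleC_right algebra_simps)
    finally have "0 \<le> Re (cinner (R y) y + t * cinner (R y) z + cnj t * cinner (R z) y + cnj t * t * cinner (R z) z)" .
    then show "0 \<le> Re (t * cinner (R y) z + cnj t * cnj (cinner (R y) z)) + (cmod t)\<^sup>2 * Re (cinner (R z) z)"
      unfolding cmod_power2 using positive_op_Im[OF R, of z]
      by (simp add: y positive_op_self_adjoint[OF R, of z] cnj_cinner power2_eq_square algebra_simps)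
  qed (rule positive_op_Re[OF R])
  then show ?thesis using cinner_eq_zero_iff by blast
qed

lemma positive_op_kernel_orthogonal_range:
  fixes D :: "'a::chilbert \<Rightarrow> 'a"
  assumes D: "positive_op D" and z: "D z = 0" and m: "m \<in> closure (range D)"
  shows "cinner z m = 0"
proof -
  have "range D \<subseteq> {m. cinner z m = 0}"
    using z by (auto simp: positive_op_self_adjoint[OF D, symmetric])
  then show ?thesis using closure_minimal[OF _ closed_orthogonal_complement] m by blast
qed

text \<open>The range of F* is orthogonal to everything orthogonal to M, since F vanishes there.\<close>

lemma op_on_eq_hadjoint_if_orthogonal:
  fixes F :: "'a::chilbert \<Rightarrow> 'a"
  assumes F: "op_on M F" and a: "a \<in> M" and orth: "\<forall>m\<in>M. cinner (a - hadjoint F b) m = 0"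
  shows "a = hadjoint F b"
proof -
  let ?w = "a - hadjoint F b"
  have "cinner ?w (hadjoint F b) = cinner (F ?w) b"
    using F by (simp add: op_on_def cinner_hadjoint_right)
  also have "F ?w = 0" using F orth by (simp add: op_on_def)
  finally have "cinner ?w (hadjoint F b) = 0" by simp
  moreover have "cinner ?w a = 0" using orth a by blast
  ultimately have "cinner ?w ?w = 0" by (simp add: cinner_diff_right)
  then show ?thesis by (simp add: cinner_eq_zero_iff)
qed

lemma positive_op_sandwich_hadjoint:
  fixes D F :: "'a::chilbert \<Rightarrow> 'a"
  assumes D: "positive_op D" and F: "bounded_op F"
    and T: "\<And>x. D (F (D x)) = T x" and U: "\<And>x y. cinner (T x) y = cinner x (U y)"
  shows "D (hadjoint F (D y)) = U y"
proof (rule cinner_ext_right)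
  fix x
  have "cinner x (D (hadjoint F (D y))) = cinner (F (D x)) (D y)"
    by (simp add: positive_op_self_adjoint[OF D] cinner_hadjoint_right[OF F])
  also have "\<dots> = cinner (T x) y" by (simp add: positive_op_self_adjoint[OF D] flip: T)
  finally show "cinner x (D (hadjoint F (D y))) = cinner x (U y)" by (simp add: U)
qed


section \<open>The binomial series of the square root\<close>

definition sqrt_coeff :: "nat \<Rightarrow> real" where
  "sqrt_coeff k = (-1)^k * ((1/2::real) gchoose k)"

lemma sqrt_coeff_0 [simp]: "sqrt_coeff 0 = 1"
  by (simp add: sqrt_coeff_def)

lemma sqrt_coeff_nonpos:
  assumes "k \<ge> 1"
  shows "sqrt_coeff k \<le> 0"
proof -
  obtain j where k: "k = Suc j" using assms by (cases k) auto
  have "sqrt_coeff k = (-1/2) * pochhammer (1/2) j / fact k"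
    by (simp add: sqrt_coeff_def gbinomial_pochhammer power_mult_distrib[symmetric] k pochhammer_rec)
  moreover have "pochhammer (1/2::real) j > 0" by (rule pochhammer_pos) simp
  ultimately show ?thesis by (simp add: divide_nonpos_pos)
qed

lemma sum_sqrt_coeff_nonneg: "(\<Sum>k\<le>N. sqrt_coeff k) \<ge> 0"
proof -
  have "(\<Sum>k\<le>N. sqrt_coeff k) = (-1)^N * ((1/2 - 1::real) gchoose N)"
    unfolding sqrt_coeff_def using gbinomial_sum_lower_neg[of "1/2::real" N] by (simp add: mult.commute)
  also have "\<dots> = pochhammer (1/2) N / fact N"
    by (simp add: gbinomial_pochhammer power_mult_distrib[symmetric])
  finally show ?thesis by (simp add: pochhammer_pos less_imp_le)
qed

lemma summable_abs_sqrt_coeff: "summable (\<lambda>k. \<bar>sqrt_coeff k\<bar>)"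
proof (rule bounded_imp_summable[where B = 2])
  fix N
  have "\<bar>sqrt_coeff k\<bar> = (if k = 0 then 2 else 0) - sqrt_coeff k" for k
    using sqrt_coeff_nonpos[of k] by (cases "k = 0") auto
  then have "(\<Sum>k\<le>N. \<bar>sqrt_coeff k\<bar>) = (\<Sum>k\<le>N. (if k = 0 then 2 else 0) - sqrt_coeff k)"
    by simp
  also have "\<dots> = 2 - (\<Sum>k\<le>N. sqrt_coeff k)" by (simp add: sum_subtractf)
  finally show "(\<Sum>k\<le>N. \<bar>sqrt_coeff k\<bar>) \<le> 2" using sum_sqrt_coeff_nonneg[of N] by simp
qed auto

lemma summable_sqrt_coeff: "summable sqrt_coeff"
  using summable_abs_sqrt_coeff by (rule summable_rabs_cancel)

lemma suminf_sqrt_coeff_nonneg: "suminf sqrt_coeff \<ge> 0"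
proof (rule LIMSEQ_le_const[OF summable_LIMSEQ[OF summable_sqrt_coeff]])
  have "0 \<le> sum sqrt_coeff {..<n}" if "n \<ge> 1" for n
    using that sum_sqrt_coeff_nonneg[of "n - 1"] by (simp add: lessThan_Suc_atMost[symmetric])
  then show "\<exists>N. \<forall>n\<ge>N. 0 \<le> sum sqrt_coeff {..<n}" by blast
qed

text \<open>The Cauchy square of the coefficients is that of 1 - X, by Vandermonde's identity.\<close>

lemma sqrt_coeff_convolution:
  "(\<Sum>i\<le>m. sqrt_coeff i * sqrt_coeff (m - i)) = (if m = 0 then 1 else if m = 1 then -1 else 0)"
proof -
  have "(\<Sum>i\<le>m. sqrt_coeff i * sqrt_coeff (m - i))
      = (-1)^m * (\<Sum>i=0..m. ((1/2::real) gchoose i) * ((1/2) gchoose (m - i)))"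
    unfolding sum_distrib_left atLeast0AtMost
    by (rule sum.cong) (auto simp: sqrt_coeff_def algebra_simps simp flip: power_add)
  also have "\<dots> = (-1)^m * ((1::real) gchoose m)"
    using gbinomial_Vandermonde[of "1/2::real" "1/2" m] by simp
  also have "\<dots> = (if m = 0 then 1 else if m = 1 then -1 else 0)"
    using binomial_gbinomial[of 1 m, where 'a = real] by (cases m) (auto simp: binomial_eq_0)
  finally show ?thesis .
qed

text \<open>The proof of Cauchy_product_sums, with a bounded bilinear map in place of the product.\<close>

lemma bounded_bilinear_Cauchy_product_sums:
  fixes a :: "nat \<Rightarrow> 'a::banach" and b :: "nat \<Rightarrow> 'b::banach" and prod :: "'a \<Rightarrow> 'b \<Rightarrow> 'c::banach"
  assumes bb: "bounded_bilinear prod"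
    and a: "summable (\<lambda>k. norm (a k))"
    and b: "summable (\<lambda>k. norm (b k))"
  shows "(\<lambda>k. \<Sum>i\<le>k. prod (a i) (b (k - i))) sums (prod (\<Sum>k. a k) (\<Sum>k. b k))"
proof -
  obtain K where K: "K > 0" "\<And>x y. norm (prod x y) \<le> norm x * norm y * K"
    using bounded_bilinear.pos_bounded[OF bb] by blast
  let ?S1 = "\<lambda>n::nat. {..<n} \<times> {..<n}"
  let ?S2 = "\<lambda>n::nat. {(i,j). i + j < n}"
  have S2_le_S1: "\<And>n. ?S2 n \<subseteq> ?S1 n" by auto
  have finite_S2: "\<And>n. finite (?S2 n)" by (rule finite_subset[OF S2_le_S1]) simp
  let ?g = "\<lambda>(i,j). prod (a i) (b j)"
  let ?f = "\<lambda>(i,j). norm (a i) * norm (b j)"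
  have "(\<lambda>n. prod (\<Sum>k<n. a k) (\<Sum>k<n. b k)) \<longlonglongrightarrow> prod (\<Sum>k. a k) (\<Sum>k. b k)"
    by (intro bounded_bilinear.tendsto[OF bb] summable_LIMSEQ summable_norm_cancel[OF a]
        summable_norm_cancel[OF b])
  moreover have "prod (sum a {..<n}) (sum b {..<n}) = sum ?g (?S1 n)" for n
    unfolding bounded_bilinear.sum_left[OF bb] unfolding bounded_bilinear.sum_right[OF bb]
    by (simp add: sum.cartesian_product)
  ultimately have lim_S1: "(\<lambda>n. sum ?g (?S1 n)) \<longlonglongrightarrow> prod (\<Sum>k. a k) (\<Sum>k. b k)"
    by simp
  have "(\<lambda>n. (\<Sum>k<n. norm (a k)) * (\<Sum>k<n. norm (b k))) \<longlonglongrightarrow> (\<Sum>k. norm (a k)) * (\<Sum>k. norm (b k))"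
    using a b by (intro tendsto_mult summable_LIMSEQ)
  then have "(\<lambda>n. sum ?f (?S1 n)) \<longlonglongrightarrow> (\<Sum>k. norm (a k)) * (\<Sum>k. norm (b k))"
    by (simp only: sum_product sum.Sigma[rule_format] finite_lessThan)
  then have "Cauchy (\<lambda>n. sum ?f (?S1 n))"
    by (intro convergent_Cauchy convergentI)
  then have "(\<lambda>n. sum ?f (?S1 n - ?S2 n)) \<longlonglongrightarrow> 0"
  proof (intro LIMSEQ_I)
    fix r :: real assume r: "0 < r" and C: "Cauchy (\<lambda>n. sum ?f (?S1 n))"
    obtain N where N: "\<forall>m\<ge>N. \<forall>n\<ge>N. norm (sum ?f (?S1 m) - sum ?f (?S1 n)) < r"
      using CauchyD[OF C r] by blast
    have small: "sum ?f (?S1 n - ?S2 n) < r" if "2 * N \<le> n" for n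
    proof -
      have "sum ?f (?S1 n - ?S2 n) \<le> sum ?f (?S1 n - ?S1 (n div 2))"
        by (intro sum_mono2) auto
      also have "\<dots> = sum ?f (?S1 n) - sum ?f (?S1 (n div 2))"
        by (rule sum_diff) auto
      also have "\<dots> < r" using N[rule_format, of n "n div 2"] that by (simp add: abs_less_iff)
      finally show ?thesis .
    qed
    have "0 \<le> sum ?f X" for X by (rule sum_nonneg) auto
    then show "\<exists>no. \<forall>n\<ge>no. norm (sum ?f (?S1 n - ?S2 n) - 0) < r"
      using small by (metis abs_of_nonneg diff_zero real_norm_def)
  qed
  then have "Zfun (\<lambda>n. sum ?f (?S1 n - ?S2 n) * K) sequentially"
    by (intro Zfun_mult_left) (simp add: tendsto_Zfun_iff)
  then have "Zfun (\<lambda>n. sum ?g (?S1 n - ?S2 n)) sequentially"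
  proof (rule Zfun_le[rule_format])
    fix n
    have "norm (sum ?g (?S1 n - ?S2 n)) \<le> (\<Sum>x\<in>?S1 n - ?S2 n. ?f x * K)"
      by (rule order_trans[OF norm_sum sum_mono]) (auto simp: K(2))
    then show "norm (sum ?g (?S1 n - ?S2 n)) \<le> norm (sum ?f (?S1 n - ?S2 n) * K)"
      using K(1) by (simp add: sum_distrib_right[symmetric] sum_nonneg)
  qed
  then have "(\<lambda>n. sum ?g (?S1 n) - sum ?g (?S2 n)) \<longlonglongrightarrow> 0"
    unfolding tendsto_Zfun_iff diff_0_right by (simp only: sum_diff finite_SigmaI finite_lessThan S2_le_S1)
  with lim_S1 have "(\<lambda>n. sum ?g (?S2 n)) \<longlonglongrightarrow> prod (\<Sum>k. a k) (\<Sum>k. b k)"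
    by (rule Lim_transform2)
  then show ?thesis by (simp only: sums_def sum.triangle_reindex)
qed

text \<open>The binomial series for (I - C)^{1/2}, norm convergent for a contraction C.\<close>

definition sqrt_one_minus :: "('a::complex_inner \<Rightarrow> 'a) \<Rightarrow> 'a \<Rightarrow> 'a" where
  "sqrt_one_minus C x = (\<Sum>k. sqrt_coeff k *\<^sub>R (C ^^ k) x)"

lemma summable_norm_sqrt_one_minus:
  "contraction_op C \<Longrightarrow> summable (\<lambda>k. norm (sqrt_coeff k *\<^sub>R (C ^^ k) x))"
  by (rule summable_comparison_test[OF _ summable_mult2[OF summable_abs_sqrt_coeff, of "norm x"]])
     (auto intro!: mult_left_mono contraction_op_funpow)

lemma summable_sqrt_one_minus:
  fixes C :: "'a::chilbert \<Rightarrow> 'a"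
  shows "contraction_op C \<Longrightarrow> summable (\<lambda>k. sqrt_coeff k *\<^sub>R (C ^^ k) x)"
  by (rule summable_norm_cancel[OF summable_norm_sqrt_one_minus])

lemma sqrt_one_minus_intertwine:
  fixes C1 C2 T :: "'a::chilbert \<Rightarrow> 'a"
  assumes T: "bounded_op T" and C1: "contraction_op C1" and TC: "\<And>x. T (C1 x) = C2 (T x)"
  shows "T (sqrt_one_minus C1 x) = sqrt_one_minus C2 (T x)"
proof -
  have "T ((C1 ^^ k) x) = (C2 ^^ k) (T x)" for k by (induction k) (auto simp: TC)
  then show ?thesis
    unfolding sqrt_one_minus_def
    using bounded_linear.suminf[OF bounded_op_linear[OF T] summable_sqrt_one_minus[OF C1]]
    by (simp add: bounded_op_scaleR[OF T])
qed

lemma bounded_op_sqrt_one_minus: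
  fixes C :: "'a::chilbert \<Rightarrow> 'a"
  assumes C: "contraction_op C"
  shows "bounded_op (sqrt_one_minus C)"
proof -
  have Ck: "bounded_op (C ^^ k)" for k by (rule bounded_op_funpow[OF contraction_op_bounded[OF C]])
  note summable = summable_sqrt_one_minus[OF C]
  have "sqrt_one_minus C (x + y) = sqrt_one_minus C x + sqrt_one_minus C y" for x y
    unfolding sqrt_one_minus_def suminf_add[OF summable summable]
    by (simp add: bounded_op_add[OF Ck] scaleR_add_right)
  moreover have "sqrt_one_minus C (scaleC a x) = scaleC a (sqrt_one_minus C x)" for a x
    unfolding sqrt_one_minus_def bounded_linear.suminf[OF bounded_linear_scaleC summable]
    by (simp add: bounded_op_scaleC[OF Ck] scaleC_scaleR_commute)
  moreover have "norm (sqrt_one_minus C x) \<le> norm x * (\<Sum>k. \<bar>sqrt_coeff k\<bar>)" for x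
  proof -
    have "norm (sqrt_one_minus C x) \<le> (\<Sum>k. norm (sqrt_coeff k *\<^sub>R (C ^^ k) x))"
      unfolding sqrt_one_minus_def by (rule summable_norm[OF summable_norm_sqrt_one_minus[OF C]])
    also have "\<dots> \<le> (\<Sum>k. \<bar>sqrt_coeff k\<bar> * norm x)"
      using summable_norm_sqrt_one_minus[OF C] summable_mult2[OF summable_abs_sqrt_coeff]
      by (intro suminf_le) (auto intro!: mult_left_mono contraction_op_funpow[OF C])
    finally show ?thesis using suminf_mult2[OF summable_abs_sqrt_coeff, of "norm x"] by (simp add: mult.commute)
  qed
  ultimately show ?thesis unfolding bounded_op_def by blast
qed

text \<open>The Cauchy product is taken for the bilinear map applying a bounded linear function
  to a vector, so that the coefficients of the operator series are elements of a Banach space.\<close>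

lemma sqrt_one_minus_square:
  fixes C :: "'a::chilbert \<Rightarrow> 'a"
  assumes C: "contraction_op C"
  shows "sqrt_one_minus C (sqrt_one_minus C x) = x - C x"
proof -
  have Ck: "bounded_linear (C ^^ k)" for k
    by (rule bounded_op_linear[OF bounded_op_funpow[OF contraction_op_bounded[OF C]]])
  define a where "a = (\<lambda>i. sqrt_coeff i *\<^sub>R Blinfun (C ^^ i))"
  define b where "b = (\<lambda>k. sqrt_coeff k *\<^sub>R (C ^^ k) x)"
  define \<delta> :: "nat \<Rightarrow> real" where "\<delta> = (\<lambda>k. if k = 0 then 1 else if k = 1 then -1 else 0)"
  have a_apply: "blinfun_apply (a i) y = sqrt_coeff i *\<^sub>R (C ^^ i) y" for i y
    by (simp add: a_def blinfun.scaleR_left bounded_linear_Blinfun_apply[OF Ck])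
  have "norm (Blinfun (C ^^ i)) \<le> 1" for i
    by (rule norm_blinfun_bound) (auto simp: bounded_linear_Blinfun_apply[OF Ck] contraction_op_funpow[OF C])
  then have "summable (\<lambda>i. norm (a i))"
    by (intro summable_comparison_test[OF _ summable_abs_sqrt_coeff]) (auto simp: a_def mult_left_le)
  moreover have "summable (\<lambda>k. norm (b k))" unfolding b_def by (rule summable_norm_sqrt_one_minus[OF C])
  ultimately have "(\<lambda>k. \<Sum>i\<le>k. blinfun_apply (a i) (b (k - i))) sums (blinfun_apply (\<Sum>k. a k) (\<Sum>k. b k))"
    by (rule bounded_bilinear_Cauchy_product_sums[OF bounded_bilinear_blinfun_apply])
  moreover have "blinfun_apply (\<Sum>i. a i) y = sqrt_one_minus C y" for y
    using bounded_linear.suminf[OF blinfun.bounded_linear_left summable_norm_cancel[OF \<open>summable (\<lambda>i. norm (a i))\<close>]]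
    by (simp add: a_apply sqrt_one_minus_def)
  moreover have "(\<Sum>i\<le>k. blinfun_apply (a i) (b (k - i))) = \<delta> k *\<^sub>R (C ^^ k) x" for k
  proof -
    have "(C ^^ i) ((C ^^ (k - i)) x) = (C ^^ k) x" if "i \<le> k" for i
      using that by (metis funpow_add le_add_diff_inverse comp_apply)
    then have "(\<Sum>i\<le>k. blinfun_apply (a i) (b (k - i))) = (\<Sum>i\<le>k. sqrt_coeff i * sqrt_coeff (k - i)) *\<^sub>R (C ^^ k) x"
      by (simp add: a_apply b_def linear_scale[OF bounded_linear.linear[OF Ck]] scaleR_sum_left)
    then show ?thesis by (simp add: sqrt_coeff_convolution \<delta>_def)
  qed
  ultimately have "(\<lambda>k. \<delta> k *\<^sub>R (C ^^ k) x) sums sqrt_one_minus C (sqrt_one_minus C x)"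
    by (simp add: b_def sqrt_one_minus_def)
  moreover have "(\<lambda>k. \<delta> k *\<^sub>R (C ^^ k) x) sums (x - C x)"
    using sums_finite[of "{0, 1}" "\<lambda>k. \<delta> k *\<^sub>R (C ^^ k) x"] by (simp add: \<delta>_def)
  ultimately show ?thesis by (rule sums_unique2)
qed


section \<open>Defect operators\<close>

lemma hadjoint_comp_self_facts:
  fixes Q :: "'a::chilbert \<Rightarrow> 'a"
  assumes Q: "contraction_op Q"
  shows "contraction_op (\<lambda>x. hadjoint Q (Q x))"
    and "\<And>x y. cinner (hadjoint Q (Q x)) y = cinner x (hadjoint Q (Q y))"
    and "\<And>x. cinner (hadjoint Q (Q x)) x = cinner (Q x) (Q x)"
  using contraction_op_comp[OF contraction_op_hadjoint[OF Q] Q] contraction_op_bounded[OF Q]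
  by (simp_all add: cinner_hadjoint_left cinner_hadjoint_right)

text \<open>Powers of Q* Q give nonnegative forms: split off a square root of the even part.\<close>

lemma cinner_funpow_hadjoint_comp_self:
  fixes Q :: "'a::chilbert \<Rightarrow> 'a"
  assumes Q: "contraction_op Q"
  defines "C \<equiv> (\<lambda>x. hadjoint Q (Q x))"
  shows "\<exists>t\<ge>0. cinner ((C ^^ k) x) x = complex_of_real t"
proof -
  have sa: "\<And>x y. cinner (C x) y = cinner x (C y)" and cq: "\<And>x. cinner (C x) x = cinner (Q x) (Q x)"
    using hadjoint_comp_self_facts[OF Q] unfolding C_def by auto
  have sa_pow: "cinner ((C ^^ m) x) y = cinner x ((C ^^ m) y)" for m x y
  proof (induction m arbitrary: y)
    case (Suc m)
    have "cinner ((C ^^ Suc m) x) y = cinner ((C ^^ m) x) (C y)" by (simp add: sa)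
    also have "\<dots> = cinner x ((C ^^ Suc m) y)" by (simp add: Suc funpow_swap1)
    finally show ?case .
  qed simp
  define m where "m = k div 2"
  define u where "u = (C ^^ m) x"
  have "k = m + m \<or> k = Suc (m + m)" unfolding m_def by presburger
  then consider "k = m + m" | "k = Suc (m + m)" by blast
  then show ?thesis
  proof cases
    case 1
    then have "cinner ((C ^^ k) x) x = cinner u u" by (simp add: u_def funpow_add sa_pow)
    then show ?thesis by (auto simp: cinner_self intro!: exI[of _ "(norm u)\<^sup>2"])
  next
    case 2
    then have "cinner ((C ^^ k) x) x = cinner ((C ^^ m) (C u)) x"
      by (simp add: u_def funpow_add funpow_swap1)
    also have "\<dots> = cinner (Q u) (Q u)" by (simp add: sa_pow u_def cq)
    finally have "cinner ((C ^^ k) x) x = cinner (Q u) (Q u)" .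
    then show ?thesis by (auto simp: cinner_self intro!: exI[of _ "(norm (Q u))\<^sup>2"])
  qed
qed

lemma positive_op_sqrt_one_minus:
  fixes Q :: "'a::chilbert \<Rightarrow> 'a"
  assumes Q: "contraction_op Q"
  defines "C \<equiv> (\<lambda>x. hadjoint Q (Q x))"
  shows "positive_op (sqrt_one_minus C)"
proof -
  have C: "contraction_op C" using hadjoint_comp_self_facts[OF Q] unfolding C_def by auto
  have "Im (cinner (sqrt_one_minus C x) x) = 0 \<and> 0 \<le> Re (cinner (sqrt_one_minus C x) x)" for x
  proof -
    define r where "r = (\<lambda>k. cinner ((C ^^ k) x) x)"
    have r: "Im (r k) = 0" "0 \<le> Re (r k)" for k
      using cinner_funpow_hadjoint_comp_self[OF Q, of k x] by (auto simp: r_def C_def)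
    have r_le: "Re (r k) \<le> (norm x)\<^sup>2" for k
      using complex_Re_le_cmod[of "r k"] cmod_cinner_le[of "(C ^^ k) x" x]
        mult_right_mono[OF contraction_op_funpow[OF C, of k x] norm_ge_zero[of x]]
      by (simp add: r_def power2_eq_square)
    have "(\<lambda>k. cinner (sqrt_coeff k *\<^sub>R (C ^^ k) x) x) sums cinner (sqrt_one_minus C x) x"
      unfolding sqrt_one_minus_def
      by (rule bounded_linear.sums[OF bounded_linear_cinner_left summable_sums[OF summable_sqrt_one_minus[OF C]]])
    then have sR: "(\<lambda>k. sqrt_coeff k * Re (r k)) sums Re (cinner (sqrt_one_minus C x) x)"
      and sI: "(\<lambda>k. sqrt_coeff k * Im (r k)) sums Im (cinner (sqrt_one_minus C x) x)"
      using sums_Re sums_Im by (fastforce simp: cinner_scaleR_left r_def)+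
    have "Im (cinner (sqrt_one_minus C x) x) = 0" using sI by (simp add: r sums_unique2)
    moreover have "suminf sqrt_coeff * (norm x)\<^sup>2 \<le> Re (cinner (sqrt_one_minus C x) x)"
    proof (rule sums_le[OF _ sums_mult2[OF summable_sums[OF summable_sqrt_coeff]] sR])
      fix k
      show "sqrt_coeff k * (norm x)\<^sup>2 \<le> sqrt_coeff k * Re (r k)"
        using sqrt_coeff_nonpos[of k] r_le[of k]
        by (cases "k = 0") (auto simp: r_def Re_cinner_self sqrt_coeff_def mult_left_mono_neg)
    qed
    ultimately show ?thesis using suminf_sqrt_coeff_nonneg by (meson mult_nonneg_nonneg zero_le_power2 order_trans)
  qed
  then show ?thesis unfolding positive_op_def using bounded_op_sqrt_one_minus[OF C] by blast
qed

text \<open>R commutes with C, hence with the series S. For y = S x - R x this gives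
  S y + R y = (S^2 - R^2) x = 0, so positivity forces S y = R y = 0 and then
  |y|^2 = (x, S y - R y) = 0.\<close>

lemma positive_sqrt_unique:
  fixes Q :: "'a::chilbert \<Rightarrow> 'a"
  assumes Q: "contraction_op Q"
  defines "C \<equiv> (\<lambda>x. hadjoint Q (Q x))"
  assumes R: "positive_op R" and RR: "\<And>x. R (R x) = x - C x"
  shows "R = sqrt_one_minus C"
proof
  fix x
  let ?S = "sqrt_one_minus C"
  have C: "contraction_op C" using hadjoint_comp_self_facts[OF Q] unfolding C_def by auto
  have S: "positive_op ?S" unfolding C_def by (rule positive_op_sqrt_one_minus[OF Q])
  have RB: "bounded_op R" and SB: "bounded_op ?S" using R S by (auto simp: positive_op_bounded)
  have "R (C x) = C (R x)" for x using RR[of "R x"] RR[of x] by (simp add: bounded_op_diff[OF RB])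
  then have RS: "R (?S x) = ?S (R x)" for x by (rule sqrt_one_minus_intertwine[OF RB C])
  define y where "y = ?S x - R x"
  have "?S y + R y = 0"
    by (simp add: y_def bounded_op_diff[OF SB] bounded_op_diff[OF RB] sqrt_one_minus_square[OF C] RR RS)
  then have "Re (cinner (?S y) y) + Re (cinner (R y) y) = 0"
    by (metis cinner_add_left cinner_zero_left plus_complex.simps(1) zero_complex.simps(1))
  then have "cinner (?S y) y = 0" "cinner (R y) y = 0"
    using positive_op_Re[OF S, of y] positive_op_Re[OF R, of y]
      positive_op_Im[OF S, of y] positive_op_Im[OF R, of y] by (auto simp: complex_eq_iff)
  then have "?S y = 0" "R y = 0" using positive_op_eq_zero[OF S] positive_op_eq_zero[OF R] by auto
  then have "cinner y y = 0"
    by (simp add: y_def cinner_diff_left positive_op_self_adjoint[OF S] positive_op_self_adjoint[OF R])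
  then show "R x = ?S x" by (simp add: y_def cinner_eq_zero_iff)
qed

lemma defect_eq_sqrt_one_minus:
  fixes Q :: "'a::chilbert \<Rightarrow> 'a"
  assumes Q: "contraction_op Q"
  shows "defect Q = sqrt_one_minus (\<lambda>x. hadjoint Q (Q x))"
  unfolding defect_def
proof (rule the_equality)
  show "positive_op (sqrt_one_minus (\<lambda>x. hadjoint Q (Q x))) \<and>
      (\<forall>x. sqrt_one_minus (\<lambda>x. hadjoint Q (Q x)) (sqrt_one_minus (\<lambda>x. hadjoint Q (Q x)) x) = x - hadjoint Q (Q x))"
    using positive_op_sqrt_one_minus[OF Q] sqrt_one_minus_square hadjoint_comp_self_facts(1)[OF Q] by blast
qed (use positive_sqrt_unique[OF Q] in blast)

lemma positive_op_defect: "contraction_op (Q::'a::chilbert \<Rightarrow> 'a) \<Longrightarrow> positive_op (defect Q)"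
  by (simp add: defect_eq_sqrt_one_minus positive_op_sqrt_one_minus)

lemma defect_intertwine:
  fixes Q :: "'a::chilbert \<Rightarrow> 'a"
  assumes Q: "contraction_op Q"
  shows "Q (defect Q x) = defect (hadjoint Q) (Q x)"
proof -
  have QB: "bounded_op Q" using Q by (rule contraction_op_bounded)
  have "Q (sqrt_one_minus (\<lambda>x. hadjoint Q (Q x)) x) = sqrt_one_minus (\<lambda>x. Q (hadjoint Q x)) (Q x)"
    by (rule sqrt_one_minus_intertwine[OF QB hadjoint_comp_self_facts(1)[OF Q]]) simp
  moreover have "defect (hadjoint Q) = sqrt_one_minus (\<lambda>x. Q (hadjoint Q x))"
    using defect_eq_sqrt_one_minus[OF contraction_op_hadjoint[OF Q]] by (simp only: hadjoint_hadjoint[OF QB])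
  ultimately show ?thesis by (simp only: defect_eq_sqrt_one_minus[OF Q])
qed

lemma defect_space_image:
  fixes Q :: "'a::chilbert \<Rightarrow> 'a"
  assumes Q: "contraction_op Q" and m: "m \<in> defect_space Q"
  shows "Q m \<in> defect_space (hadjoint Q)"
proof -
  have "Q ` range (defect Q) \<subseteq> defect_space (hadjoint Q)"
    by (auto simp: defect_space_def defect_intertwine[OF Q] intro: closure_subset[THEN subsetD])
  then have "Q ` closure (range (defect Q)) \<subseteq> defect_space (hadjoint Q)"
    using image_closure_subset[OF linear_continuous_on[OF bounded_op_linear[OF contraction_op_bounded[OF Q]]]]
    by (simp add: defect_space_def)
  then show ?thesis using m by (auto simp: defect_space_def)
qed


section \<open>Fundamental operators\<close>

lemma fundamental_operators_intertwine:
  fixes P Si Sj A B :: "'a::chilbert \<Rightarrow> 'a"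
  assumes P: "contraction_op P" and Si: "bounded_op Si" and Sj: "bounded_op Sj"
    and commute: "\<And>x. Si (P x) = P (Si x)"
    and A: "op_on (defect_space P) A" "\<And>x. Si x - hadjoint Sj (P x) = defect P (A (defect P x))"
    and B: "op_on (defect_space (hadjoint P)) B"
      "\<And>x. hadjoint Si x - hadjoint (hadjoint Sj) (hadjoint P x)
         = defect (hadjoint P) (B (defect (hadjoint P) x))"
    and x: "x \<in> defect_space P"
  shows "P (A x) = hadjoint B (P x)"
proof -
  define DP DQ where "DP = defect P" and "DQ = defect (hadjoint P)"
  define W where "W y = P (A y) - hadjoint B (P y)" for y
  have PB: "bounded_op P" using P by (rule contraction_op_bounded)
  have AB: "bounded_op A" and BB: "bounded_op B" using A(1) B(1) by (auto simp: op_on_def)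
  have DQ: "positive_op DQ" unfolding DQ_def by (rule positive_op_defect[OF contraction_op_hadjoint[OF P]])
  have B_sandwich: "DQ (hadjoint B (DQ u)) = Si u - P (hadjoint Sj u)" for u
  proof (rule positive_op_sandwich_hadjoint[OF DQ BB])
    show "DQ (B (DQ x)) = hadjoint Si x - Sj (hadjoint P x)" for x
      using B(2)[of x] hadjoint_hadjoint[OF Sj] by (simp add: DQ_def)
    show "cinner (hadjoint Si x - Sj (hadjoint P x)) y = cinner x (Si y - P (hadjoint Sj y))" for x y
      by (simp add: cinner_diff_left cinner_diff_right cinner_hadjoint_left[OF Si]
          cinner_hadjoint_right[OF Sj] cinner_hadjoint_left[OF PB])
  qed
  have DQ_W: "DQ (W (DP u)) = 0" for u
  proof -
    have "DQ (P (A (DP u))) = P (Si u) - P (hadjoint Sj (P u))"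
      by (simp add: DP_def DQ_def defect_intertwine[OF P, symmetric] A(2)[symmetric] bounded_op_diff[OF PB])
    moreover have "DQ (hadjoint B (P (DP u))) = Si (P u) - P (hadjoint Sj (P u))"
      by (simp add: DP_def DQ_def defect_intertwine[OF P] B_sandwich[unfolded DQ_def])
    ultimately show ?thesis
      by (simp add: W_def bounded_op_diff[OF positive_op_bounded[OF DQ]] commute)
  qed
  have "W (DP u) = 0" for u
  proof -
    have "DP u \<in> defect_space P" unfolding defect_space_def DP_def by (rule closure_subset[THEN subsetD]) simp
    then have "A (DP u) \<in> defect_space P" using A(1) by (auto simp: op_on_def)
    then have "P (A (DP u)) \<in> defect_space (hadjoint P)" by (rule defect_space_image[OF P])
    moreover have "\<forall>m\<in>defect_space (hadjoint P). cinner (W (DP u)) m = 0"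
      using positive_op_kernel_orthogonal_range[OF DQ DQ_W] by (simp add: defect_space_def DQ_def)
    ultimately have "P (A (DP u)) = hadjoint B (P (DP u))"
      unfolding W_def by (rule op_on_eq_hadjoint_if_orthogonal[OF B(1)])
    then show ?thesis by (simp add: W_def)
  qed
  moreover have "bounded_linear W"
    unfolding W_def using bounded_op_linear[OF bounded_op_comp[OF PB AB]]
      bounded_op_linear[OF bounded_op_comp[OF bounded_op_hadjoint[OF BB] PB]]
    by (rule bounded_linear_sub)
  ultimately have "W x = 0"
    using x bounded_linear_zero_on_closure[of W "range DP"] by (auto simp: defect_space_def DP_def)
  then show ?thesis by (simp add: W_def)
qed


section \<open>Gamma_n-contractions\<close>

lemma esym_top: "esym n n z = (\<Prod>i\<in>{1..n}. z i)"
proof -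
  have "{I. I \<subseteq> {1..n} \<and> card I = n} = {{1..n}}"
  proof (intro equalityI subsetI)
    fix I assume "I \<in> {I. I \<subseteq> {1..n} \<and> card I = n}"
    then show "I \<in> {{1..n}}" by (simp add: card_subset_eq)
  qed auto
  then show ?thesis by (simp add: esym_def)
qed

lemma Gamma_nonempty: "Gamma n \<noteq> {}"
proof -
  have "(\<lambda>k. if k \<in> {1..n} then esym n k (\<lambda>_. 0) else 0) \<in> Gamma n"
    unfolding Gamma_def by (rule CollectI, rule exI[of _ "\<lambda>_. 0"]) auto
  then show ?thesis by blast
qed

lemma Gamma_last_le_one:
  assumes "w \<in> Gamma n"
  shows "cmod (w n) \<le> 1"
proof (cases "n = 0")
  case True then show ?thesis using assms by (auto simp: Gamma_def)
next
  case False
  obtain z where z: "\<forall>j\<in>{1..n}. cmod (z j) \<le> 1" "\<forall>k\<in>{1..n}. w k = esym n k z"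
    using assms unfolding Gamma_def by blast
  have "cmod (w n) = (\<Prod>i\<in>{1..n}. cmod (z i))" using z(2) False by (simp add: esym_top prod_norm)
  also have "\<dots> \<le> (\<Prod>i\<in>{1..n}. 1)" using z(1) by (intro prod_mono) auto
  finally show ?thesis by simp
qed

lemma op_monomial_eq_id:
  "(\<And>j. 1 \<le> j \<Longrightarrow> j \<le> k \<Longrightarrow> \<alpha> j = 0) \<Longrightarrow> op_monomial T \<alpha> k = id"
  by (induction k) auto

lemma gamma_contraction_commute:
  assumes "gamma_contraction n S P" "i \<in> {1..n-1}"
  shows "S i (P x) = P (S i x)"
proof -
  have "i \<in> {1..n}" "n \<in> {1..n}" using assms(2) by auto
  then have "gtuple n S P i \<circ> gtuple n S P n = gtuple n S P n \<circ> gtuple n S P i"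
    using assms(1) unfolding gamma_contraction_def by blast
  moreover have "i \<noteq> n" using assms(2) by auto
  ultimately show ?thesis by (simp add: gtuple_def fun_eq_iff)
qed

lemma gamma_contraction_bounded:
  assumes "gamma_contraction n S P" "i \<in> {1..n-1}"
  shows "bounded_op (S i)"
proof -
  have i: "i \<in> {1..n}" "i \<noteq> n" using assms(2) by auto
  then have "bounded_op (gtuple n S P i)" using assms(1) unfolding gamma_contraction_def by blast
  then show ?thesis using i(2) by (simp add: gtuple_def)
qed

text \<open>The polynomial w \<mapsto> w_n has supremum at most 1 on Gamma_n, and it evaluates to P.\<close>

lemma gamma_contraction_last:
  assumes G: "gamma_contraction n S P" and n: "n \<ge> 1"
  shows "contraction_op P"
proof -
  define \<alpha> :: "nat \<Rightarrow> nat" where "\<alpha> j = (if j = n then 1 else 0)" for j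
  define c :: "(nat \<Rightarrow> nat) \<Rightarrow> complex" where "c \<alpha> = 1" for \<alpha>
  obtain m where m: "n = Suc m" using n by (cases n) auto
  have "op_monomial (gtuple n S P) \<alpha> m = id"
    by (rule op_monomial_eq_id) (auto simp: \<alpha>_def m)
  moreover have "gtuple (Suc m) S P (Suc m) = P" by (simp add: gtuple_def)
  ultimately have "op_monomial (gtuple n S P) \<alpha> n = P" by (simp add: m \<alpha>_def)
  then have P: "poly_op n {\<alpha>} c (gtuple n S P) x = P x" for x
    by (simp add: poly_op_def c_def scaleC_one)
  have "poly_eval n {\<alpha>} c w = w n" for w
  proof -
    have "(\<Prod>j\<in>{1..n}. w j ^ \<alpha> j) = (\<Prod>j\<in>{1..n}. if j = n then w j else 1)"
      by (rule prod.cong) (auto simp: \<alpha>_def)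
    also have "\<dots> = w n" using n by simp
    finally show ?thesis by (simp add: poly_eval_def c_def)
  qed
  then have sup: "(SUP w\<in>Gamma n. cmod (poly_eval n {\<alpha>} c w)) \<le> 1"
    using Gamma_nonempty Gamma_last_le_one by (intro cSUP_least) auto
  have "norm (P x) \<le> norm x" for x
  proof -
    have "\<forall>M c. finite M \<longrightarrow> (\<forall>x. norm (poly_op n M c (gtuple n S P) x)
        \<le> (SUP w\<in>Gamma n. cmod (poly_eval n M c w)) * norm x)"
      using G unfolding gamma_contraction_def by (elim conjE)
    then have "norm (poly_op n {\<alpha>} c (gtuple n S P) x) \<le> (SUP w\<in>Gamma n. cmod (poly_eval n {\<alpha>} c w)) * norm x"
      by blast
    then have "norm (P x) \<le> (SUP w\<in>Gamma n. cmod (poly_eval n {\<alpha>} c w)) * norm x"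
      by (simp only: P)
    also have "\<dots> \<le> 1 * norm x" by (rule mult_right_mono[OF sup norm_ge_zero])
    finally show ?thesis by simp
  qed
  moreover have "n \<in> {1..n}" using n by simp
  then have "bounded_op (gtuple n S P n)" using G unfolding gamma_contraction_def by blast
  then have "bounded_op P" by (simp add: gtuple_def)
  ultimately show ?thesis by (simp add: contraction_op_def)
qed

theorem mainTheorem17:
  fixes n :: nat and S :: "nat \<Rightarrow> 'a::chilbert \<Rightarrow> 'a" and P :: "'a \<Rightarrow> 'a"
    and A B :: "nat \<Rightarrow> 'a \<Rightarrow> 'a"
  assumes "gamma_contraction n S P"
    and "fundamental_tuple n S P A"
    and "fundamental_tuple n (\<lambda>i. hadjoint (S i)) (hadjoint P) B"
  shows "\<forall>i\<in>{1..n-1}. \<forall>x\<in>defect_space P. P (A i x) = hadjoint (B i) (P x)"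
proof (intro ballI)
  fix i x assume i: "i \<in> {1..n-1}" and x: "x \<in> defect_space P"
  have "n - i \<in> {1..n-1}" using i by auto
  have A: "op_on (defect_space P) (A i)"
    "\<And>y. S i y - hadjoint (S (n - i)) (P y) = defect P (A i (defect P y))"
    using assms(2) i unfolding fundamental_tuple_def by blast+
  have B: "op_on (defect_space (hadjoint P)) (B i)"
    "\<And>y. hadjoint (S i) y - hadjoint (hadjoint (S (n - i))) (hadjoint P y)
       = defect (hadjoint P) (B i (defect (hadjoint P) y))"
    using assms(3) i unfolding fundamental_tuple_def by blast+
  show "P (A i x) = hadjoint (B i) (P x)"
  proof (rule fundamental_operators_intertwine[OF _ _ _ _ A B x])
    show "contraction_op P" using i by (intro gamma_contraction_last[OF assms(1)]) auto
    show "bounded_op (S i)" "bounded_op (S (n - i))"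
      using gamma_contraction_bounded[OF assms(1)] i \<open>n - i \<in> {1..n-1}\<close> by auto
    show "S i (P y) = P (S i y)" for y by (rule gamma_contraction_commute[OF assms(1) i])
  qed
qed

end
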